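(* Let $j\ge2$, let $H$ be a graph, let $G=\mathsf{TS}_j(H)$, and let $x_Q$ be the vertex of $G$ corresponding to a $j$-clique $Q=\{a_1,\dots,a_j\}$ of $H$. Put $S:=\bigcap_{i=1}^j N_H(a_i)$ and $X:=H[S]$. Then the subgraph of $G$ induced by the neighborhood $N_G(x_Q)$ is isomorphic to the graph obtained from $j$ disjoint copies $X_1,\dots,X_j$ of $X$ (writing $s_i$ for the copy of $s\in S$ in $X_i$) by adding, for each $s\in S$, all edges among $s_1,\dots,s_j$; there are no other edges between different copies.
   Context: All graphs are finite, simple, undirected; $N_H(v)$ is the set of neighbors of $v$ in $H$ and $H[S]$ the induced subgraph. A $k$-clique of a graph $H$ is a set of $k$ pairwise adjacent vertices. For a graph $H$ and integer $k\ge1$, the Token Sliding graph $\mathsf{TS}_k(H)$ has as vertices the $k$-cliques of $H$, and two $k$-cliques $A,B$ are adjacent iff $A\setminus B=\{u\}$, $B\setminus A=\{v\}$ for some vertices $u,v$ with $uv\in E(H)$. *)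

theory Defs
  imports Main
begin

definition simple_graph :: "'a set \<Rightarrow> ('a \<Rightarrow> 'a \<Rightarrow> bool) \<Rightarrow> bool" where
  "simple_graph V E \<longleftrightarrow> finite V \<and> (\<forall>u v. E u v \<longrightarrow> u \<in> V \<and> v \<in> V)
     \<and> (\<forall>u v. E u v \<longrightarrow> E v u) \<and> (\<forall>u. \<not> E u u)"

definition nbhd :: "'a set \<Rightarrow> ('a \<Rightarrow> 'a \<Rightarrow> bool) \<Rightarrow> 'a \<Rightarrow> 'a set" where
  "nbhd V E v = {u \<in> V. E v u}"

definition induced_edges :: "('a \<Rightarrow> 'a \<Rightarrow> bool) \<Rightarrow> 'a set \<Rightarrow> 'a \<Rightarrow> 'a \<Rightarrow> bool" where
  "induced_edges E S u v \<longleftrightarrow> u \<in> S \<and> v \<in> S \<and> E u v"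

definition cliques :: "'a set \<Rightarrow> ('a \<Rightarrow> 'a \<Rightarrow> bool) \<Rightarrow> nat \<Rightarrow> 'a set set" where
  "cliques V E k = {A. A \<subseteq> V \<and> finite A \<and> card A = k \<and>
                       (\<forall>u\<in>A. \<forall>v\<in>A. u \<noteq> v \<longrightarrow> E u v)}"

definition TS_vertices :: "'a set \<Rightarrow> ('a \<Rightarrow> 'a \<Rightarrow> bool) \<Rightarrow> nat \<Rightarrow> 'a set set" where
  "TS_vertices V E k = cliques V E k"

definition TS_edges :: "'a set \<Rightarrow> ('a \<Rightarrow> 'a \<Rightarrow> bool) \<Rightarrow> nat \<Rightarrow> 'a set \<Rightarrow> 'a set \<Rightarrow> bool" where
  "TS_edges V E k A B \<longleftrightarrow> A \<in> cliques V E k \<and> B \<in> cliques V E k \<and>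
     (\<exists>u v. A - B = {u} \<and> B - A = {v} \<and> E u v)"

definition graph_iso :: "'a set \<Rightarrow> ('a \<Rightarrow> 'a \<Rightarrow> bool) \<Rightarrow> 'b set \<Rightarrow> ('b \<Rightarrow> 'b \<Rightarrow> bool) \<Rightarrow> bool" where
  "graph_iso V1 E1 V2 E2 \<longleftrightarrow> (\<exists>f. bij_betw f V1 V2 \<and>
     (\<forall>u\<in>V1. \<forall>v\<in>V1. E1 u v \<longleftrightarrow> E2 (f u) (f v)))"

text \<open>j disjoint copies X_1..X_j of X = (S, E_X); vertex (s,i) is the copy s_i.
  Edges: copies of X-edges inside each X_i, plus all edges among s_1..s_j.\<close>
definition copies_vertices :: "'a set \<Rightarrow> nat \<Rightarrow> ('a \<times> nat) set" where
  "copies_vertices S j = S \<times> {1..j}"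

definition copies_edges :: "'a set \<Rightarrow> ('a \<Rightarrow> 'a \<Rightarrow> bool) \<Rightarrow> nat \<Rightarrow> ('a \<times> nat) \<Rightarrow> ('a \<times> nat) \<Rightarrow> bool" where
  "copies_edges S EXX j x y \<longleftrightarrow> x \<in> copies_vertices S j \<and> y \<in> copies_vertices S j \<and>
     ((snd x = snd y \<and> EXX (fst x) (fst y)) \<or> (fst x = fst y \<and> snd x \<noteq> snd y))"

end

theory Submission
  imports Defs
begin

text \<open>Every neighbour of the clique Q in the token sliding graph arises by sliding one token
  a of Q to a vertex v adjacent to all of Q, i.e. it is the swap Q - {a} + {v} with v in the
  common neighbourhood S. The pair (v, a) is determined by the swap, and two swaps (v, a) and
  (w, b) differ by one slide exactly when a = b and v w is an edge (slide v to w) or when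
  v = w and a differs from b (slide a to b inside the clique). Numbering the tokens of Q by
  1..j turns the pairs (v, a) into the copies v_i.\<close>

lemma graph_iso_sym:
  assumes "graph_iso V2 E2 V1 E1"
  shows "graph_iso V1 E1 V2 E2"
proof -
  obtain f where f: "bij_betw f V2 V1" and edges: "\<forall>u\<in>V2. \<forall>v\<in>V2. E2 u v \<longleftrightarrow> E1 (f u) (f v)"
    using assms unfolding graph_iso_def by blast
  let ?g = "the_inv_into V2 f"
  have g: "bij_betw ?g V1 V2"
    using f by (rule bij_betw_the_inv_into)
  have "E1 u v \<longleftrightarrow> E2 (?g u) (?g v)" if "u \<in> V1" "v \<in> V1" for u v
  proof -
    have "f (?g u) = u" "f (?g v) = v"
      using f that by (auto simp: bij_betw_def f_the_inv_into_f)
    moreover have "?g u \<in> V2" "?g v \<in> V2"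
      using g that by (auto simp: bij_betw_apply)
    ultimately show ?thesis
      using edges by metis
  qed
  then show ?thesis
    using g unfolding graph_iso_def by blast
qed

definition common_nbhd :: "'a set \<Rightarrow> ('a \<Rightarrow> 'a \<Rightarrow> bool) \<Rightarrow> 'a set \<Rightarrow> 'a set" where
  "common_nbhd V E Q = (\<Inter>a\<in>Q. nbhd V E a)"

lemma mem_common_nbhd_iff:
  assumes "Q \<noteq> {}"
  shows "v \<in> common_nbhd V E Q \<longleftrightarrow> v \<in> V \<and> (\<forall>a\<in>Q. E a v)"
  using assms unfolding common_nbhd_def nbhd_def by blast

lemma mem_common_nbhd_notin:
  assumes "simple_graph V E" "v \<in> common_nbhd V E Q"
  shows "v \<notin> Q"
  using assms unfolding simple_graph_def common_nbhd_def nbhd_def by blast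

lemma swap_eq_swap_iff:
  assumes "v \<notin> Q" "w \<notin> Q" "a \<in> Q" "b \<in> Q"
  shows "insert v (Q - {a}) = insert w (Q - {b}) \<longleftrightarrow> v = w \<and> a = b"
proof
  assume eq: "insert v (Q - {a}) = insert w (Q - {b})"
  have "insert v (Q - {a}) - Q = {v}" "Q - insert v (Q - {a}) = {a}"
       "insert w (Q - {b}) - Q = {w}" "Q - insert w (Q - {b}) = {b}"
    using assms by auto
  then show "v = w \<and> a = b"
    using eq by auto
qed simp

lemma swap_Diff_swap:
  assumes "v \<notin> Q" "w \<notin> Q" "a \<in> Q" "b \<in> Q"
  shows "insert v (Q - {a}) - insert w (Q - {b}) =
           (if v = w then {} else {v}) \<union> (if a = b then {} else {b})"
  using assms by auto

lemma sliding_step_between_swaps_iff: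
  assumes "v \<notin> Q" "w \<notin> Q" "a \<in> Q" "b \<in> Q"
    and "a \<noteq> b \<Longrightarrow> E b a" and "\<not> E v v"
  shows "(\<exists>u x. insert v (Q - {a}) - insert w (Q - {b}) = {u} \<and>
                insert w (Q - {b}) - insert v (Q - {a}) = {x} \<and> E u x)
         \<longleftrightarrow> (a = b \<and> E v w) \<or> (v = w \<and> a \<noteq> b)"
proof -
  have "v \<noteq> b"
    using assms(1,4) by blast
  then show ?thesis
    unfolding swap_Diff_swap[OF assms(1-4)] swap_Diff_swap[OF assms(2,1,4,3)]
    using assms(5,6) by (cases "a = b"; cases "v = w") (auto simp: doubleton_eq_iff)
qed

lemma swap_in_cliques:
  assumes "simple_graph V E" "Q \<in> cliques V E k"
    and "a \<in> Q" "v \<in> V" "\<forall>x\<in>Q. E x v"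
  shows "insert v (Q - {a}) \<in> cliques V E k"
proof -
  have E_sym: "E x y \<Longrightarrow> E y x" and irrefl: "\<not> E v v" for x y
    using assms(1) unfolding simple_graph_def by blast+
  have Q: "Q \<subseteq> V" "finite Q" "card Q = k" "\<forall>x\<in>Q. \<forall>y\<in>Q. x \<noteq> y \<longrightarrow> E x y"
    using assms(2) unfolding cliques_def by blast+
  have "v \<notin> Q"
    using assms(5) irrefl by blast
  moreover have "card Q > 0"
    using Q(2) assms(3) card_gt_0_iff by blast
  ultimately have "card (insert v (Q - {a})) = card Q"
    using Q(2) assms(3) by (simp add: card_Diff_singleton)
  moreover have "E x y" if "x \<in> insert v (Q - {a})" "y \<in> insert v (Q - {a})" "x \<noteq> y" for x y
    using that Q(4) assms(5) E_sym by auto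
  moreover have "insert v (Q - {a}) \<subseteq> V" "finite (insert v (Q - {a}))"
    using Q(1,2) assms(4) by auto
  ultimately show ?thesis
    using Q(3) unfolding cliques_def by (intro CollectI conjI ballI impI) simp_all
qed

lemma TS_edges_from_clique_iff:
  assumes "simple_graph V E" "Q \<in> cliques V E k" "Q \<noteq> {}"
  shows "TS_edges V E k Q B \<longleftrightarrow> (\<exists>v\<in>common_nbhd V E Q. \<exists>a\<in>Q. B = insert v (Q - {a}))"
proof
  assume "TS_edges V E k Q B"
  then obtain a v where B: "B \<in> cliques V E k" and slide: "Q - B = {a}" "B - Q = {v}" "E a v"
    unfolding TS_edges_def by blast
  have "E x v" if "x \<in> Q" for x
  proof (cases "x = a")
    case False
    then have "x \<in> B" "v \<in> B" "x \<noteq> v"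
      using that slide by auto
    then show ?thesis
      using B unfolding cliques_def by blast
  qed (use slide in simp)
  moreover have "v \<in> V"
    using assms(1) slide(3) unfolding simple_graph_def by blast
  moreover have "a \<in> Q" "B = insert v (Q - {a})"
    using slide by auto
  ultimately show "\<exists>v\<in>common_nbhd V E Q. \<exists>a\<in>Q. B = insert v (Q - {a})"
    using mem_common_nbhd_iff[OF assms(3)] by blast
next
  assume "\<exists>v\<in>common_nbhd V E Q. \<exists>a\<in>Q. B = insert v (Q - {a})"
  then obtain v a where v: "v \<in> common_nbhd V E Q" and a: "a \<in> Q" and B: "B = insert v (Q - {a})"
    by blast
  have "v \<notin> Q"
    using assms(1) v by (rule mem_common_nbhd_notin)
  then have "Q - B = {a}" "B - Q = {v}"
    using a B by auto
  moreover have "B \<in> cliques V E k"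
    using swap_in_cliques[OF assms(1,2) a] v mem_common_nbhd_iff[OF assms(3)] B by blast
  moreover have "E a v"
    using v a mem_common_nbhd_iff[OF assms(3)] by blast
  ultimately show "TS_edges V E k Q B"
    using assms(2) unfolding TS_edges_def by (intro conjI exI)
qed

lemma TS_edges_between_swaps_iff:
  assumes "simple_graph V E" "Q \<in> cliques V E k" "Q \<noteq> {}"
    and "v \<in> common_nbhd V E Q" "w \<in> common_nbhd V E Q" "a \<in> Q" "b \<in> Q"
  shows "TS_edges V E k (insert v (Q - {a})) (insert w (Q - {b})) \<longleftrightarrow>
           (a = b \<and> E v w) \<or> (v = w \<and> a \<noteq> b)"
proof -
  have "v \<notin> Q" "w \<notin> Q"
    using mem_common_nbhd_notin[OF assms(1)] assms(4,5) by simp_all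
  moreover have "E b a" if "a \<noteq> b"
    using assms(2,6,7) that by (simp add: cliques_def)
  moreover have "\<not> E v v"
    using assms(1) by (simp add: simple_graph_def)
  ultimately have step_iff: "(\<exists>u x. insert v (Q - {a}) - insert w (Q - {b}) = {u} \<and>
                insert w (Q - {b}) - insert v (Q - {a}) = {x} \<and> E u x)
         \<longleftrightarrow> (a = b \<and> E v w) \<or> (v = w \<and> a \<noteq> b)"
    by (rule sliding_step_between_swaps_iff[OF _ _ assms(6,7)])
  have "insert x (Q - {c}) \<in> cliques V E k" if "x \<in> common_nbhd V E Q" "c \<in> Q" for x c
  proof (rule swap_in_cliques[OF assms(1,2) that(2)])
    show "x \<in> V" "\<forall>y\<in>Q. E y x"
      using that(1) mem_common_nbhd_iff[OF assms(3)] by blast+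
  qed
  then have "insert v (Q - {a}) \<in> cliques V E k" "insert w (Q - {b}) \<in> cliques V E k"
    using assms(4-7) by blast+
  with step_iff show ?thesis
    unfolding TS_edges_def by (simp only: simp_thms)
qed

lemma bij_betw_swaps_TS_nbhd:
  assumes "simple_graph V E" "Q \<in> cliques V E k" "Q \<noteq> {}"
  shows "bij_betw (\<lambda>(v, a). insert v (Q - {a})) (common_nbhd V E Q \<times> Q)
           {B \<in> TS_vertices V E k. TS_edges V E k Q B}"
proof (rule bij_betw_imageI)
  show "inj_on (\<lambda>(v, a). insert v (Q - {a})) (common_nbhd V E Q \<times> Q)"
    by (auto simp: inj_on_def swap_eq_swap_iff mem_common_nbhd_notin[OF assms(1)])
  have "TS_edges V E k Q B \<Longrightarrow> B \<in> TS_vertices V E k" for B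
    unfolding TS_edges_def TS_vertices_def by blast
  then show "(\<lambda>(v, a). insert v (Q - {a})) ` (common_nbhd V E Q \<times> Q) =
               {B \<in> TS_vertices V E k. TS_edges V E k Q B}"
    using TS_edges_from_clique_iff[OF assms] by auto
qed

theorem lemma3p15:
  fixes V :: "'a set" and E :: "'a \<Rightarrow> 'a \<Rightarrow> bool" and j :: nat and Q :: "'a set"
  assumes "simple_graph V E"
    and "j \<ge> 2"
    and "Q \<in> cliques V E j"
  defines "S \<equiv> (\<Inter>a\<in>Q. nbhd V E a)"
  defines "NQ \<equiv> {B \<in> TS_vertices V E j. TS_edges V E j Q B}"
  shows "graph_iso NQ (induced_edges (TS_edges V E j) NQ)
                   (copies_vertices S j) (copies_edges S (induced_edges E S) j)"
proof -
  have "finite Q" "card Q = j"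
    using assms(3) unfolding cliques_def by blast+
  then obtain q where q: "bij_betw q {1..j} Q"
    using ex_bij_betw_nat_finite_1 by blast
  have "Q \<noteq> {}"
    using \<open>card Q = j\<close> assms(2) by auto
  have S: "S = common_nbhd V E Q"
    unfolding S_def common_nbhd_def ..
  define h where "h = (\<lambda>(v, i). insert v (Q - {q i}))"
  have "h = (\<lambda>(v, a). insert v (Q - {a})) \<circ> map_prod id q"
    unfolding h_def by (simp add: fun_eq_iff)
  then have h_bij: "bij_betw h (copies_vertices S j) NQ"
    using bij_betw_trans[OF bij_betw_map_prod[OF bij_betw_id q]
                            bij_betw_swaps_TS_nbhd[OF assms(1,3) \<open>Q \<noteq> {}\<close>]]
    unfolding NQ_def S copies_vertices_def by simp
  moreover have "copies_edges S (induced_edges E S) j (v, i) (w, k) \<longleftrightarrow>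
                   induced_edges (TS_edges V E j) NQ (h (v, i)) (h (w, k))"
    if "(v, i) \<in> copies_vertices S j" "(w, k) \<in> copies_vertices S j" for v i w k
  proof -
    have vw: "v \<in> S" "w \<in> S" and ik: "i \<in> {1..j}" "k \<in> {1..j}"
      using that unfolding copies_vertices_def by auto
    then have "q i \<in> Q" "q k \<in> Q"
      using q by (auto simp: bij_betw_apply)
    moreover have "q i = q k \<longleftrightarrow> i = k"
      using ik bij_betw_imp_inj_on[OF q] by (auto simp: inj_on_eq_iff)
    moreover have "h (v, i) \<in> NQ" "h (w, k) \<in> NQ"
      using h_bij that by (auto simp: bij_betw_apply)
    ultimately show ?thesis
      using that vw TS_edges_between_swaps_iff[OF assms(1,3) \<open>Q \<noteq> {}\<close>]
      unfolding copies_edges_def induced_edges_def h_def S by auto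
  qed
  ultimately have "graph_iso (copies_vertices S j) (copies_edges S (induced_edges E S) j)
                     NQ (induced_edges (TS_edges V E j) NQ)"
    unfolding graph_iso_def copies_vertices_def by auto
  then show ?thesis
    by (rule graph_iso_sym)
qed

end
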